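(* Let $\Delta$ be a finite, flag, simply connected simplicial complex and $\mathcal{P}_H$ as in the context. If $(C_i)_{i=0}^m$ is a combinatorial null-homotopy for the combinatorial 1-cycle $e_1\cdot\ldots\cdot e_l$, then for every $n\in\mathbb{Z}$ the word $e_1^n\cdots e_l^n$ has $\mathrm{Area}_{\mathcal{P}_H}(e_1^n\cdots e_l^n)\le 3m|n|^2$.
   Context: $\mathrm{Edge}(\Delta)$ is the set of directed edges of $\Delta$; for $e$ in it, $\iota e$, $\tau e$ are its initial and terminal vertices and $\overline{e}$ is the reversed edge. $e_1\cdot\ldots\cdot e_l$ is a combinatorial path if $\tau e_i=\iota e_{i+1}$, and a combinatorial 1-cycle if also $\tau e_l=\iota e_1$ (the empty cycle $\emptyset$ allowed). $\mathcal{P}_H=\langle\mathrm{Edge}(\Delta)\mid\mathcal{R}_H\rangle$ where $\mathcal{R}_H$ consists of the words $e\overline{e}$ ($e\in\mathrm{Edge}(\Delta)$) and $efg$, $e^{-1}f^{-1}g^{-1}$ for every combinatorial 1-cycle $e\cdot f\cdot g$. $\mathrm{Area}_{\mathcal{P}_H}(w)$ is the least $m$ such that $w$ is freely equal to $\prod_{i=1}^m x_ir_ix_i^{-1}$ with $r_i\in\mathcal{R}_H^{\pm1}$. For a letter $e$ and $k\in\mathbb{Z}$, $e^k$ is the word of $k$ copies of $e$ if $k\ge0$ and $|k|$ copies of $e^{-1}$ if $k<0$. A combinatorial null-homotopy for a 1-cycle $C$ is a sequence $(C_i)_{i=0}^m$ of combinatorial 1-cycles with $C_0=C$, $C_m=\emptyset$,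 and each $C_{i+1}$ obtained from $C_i=e_1\cdot\ldots\cdot e_l$ by one of: inserting $e\cdot\overline{e}$ (some $e\in\mathrm{Edge}(\Delta)$) between $e_k$ and $e_{k+1}$ for some $k$ (1-cell expansion) or the reverse deletion (1-cell collapse); inserting $e\cdot f\cdot g$, where $e\cdot f\cdot g$ is a combinatorial 1-cycle, between $e_k$ and $e_{k+1}$ (2-cell expansion) or the reverse deletion (2-cell collapse). *)

theory Defs
  imports "HOL-Analysis.Analysis"
begin

definition abs_simplicial_complex :: "'v set set \<Rightarrow> bool" where
  "abs_simplicial_complex K \<longleftrightarrow>
     (\<forall>\<sigma>\<in>K. \<sigma> \<noteq> {} \<and> finite \<sigma>) \<and>
     (\<forall>\<sigma>\<in>K. \<forall>\<tau>. \<tau> \<subseteq> \<sigma> \<and> \<tau> \<noteq> {} \<longrightarrow> \<tau> \<in> K)"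

definition cx_vertices :: "'v set set \<Rightarrow> 'v set" where
  "cx_vertices K = \<Union>K"

definition finite_complex :: "'v set set \<Rightarrow> bool" where
  "finite_complex K \<longleftrightarrow> finite K"

definition flag_complex :: "'v set set \<Rightarrow> bool" where
  "flag_complex K \<longleftrightarrow>
     (\<forall>S. S \<noteq> {} \<and> finite S \<and> S \<subseteq> cx_vertices K \<and>
          (\<forall>u\<in>S. \<forall>v\<in>S. u \<noteq> v \<longrightarrow> {u, v} \<in> K) \<longrightarrow> S \<in> K)"

definition geom_realisation :: "('v::finite) set set \<Rightarrow> (real^'v) set" where
  "geom_realisation K = (\<Union>\<sigma>\<in>K. convex hull ((\<lambda>v. axis v 1) ` \<sigma>))"

definition simply_connected_complex :: "('v::finite) set set \<Rightarrow> bool" where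
  "simply_connected_complex K \<longleftrightarrow> simply_connected (geom_realisation K)"

definition Edge :: "'v set set \<Rightarrow> ('v \<times> 'v) set" where
  "Edge K = {(u, v). u \<noteq> v \<and> {u, v} \<in> K}"

definition rev_edge :: "'v \<times> 'v \<Rightarrow> 'v \<times> 'v" where
  "rev_edge e = (snd e, fst e)"

definition comb_path :: "'v set set \<Rightarrow> ('v \<times> 'v) list \<Rightarrow> bool" where
  "comb_path K es \<longleftrightarrow> set es \<subseteq> Edge K \<and>
     (\<forall>i. Suc i < length es \<longrightarrow> snd (es ! i) = fst (es ! Suc i))"

definition comb_cycle :: "'v set set \<Rightarrow> ('v \<times> 'v) list \<Rightarrow> bool" where
  "comb_cycle K es \<longleftrightarrow> comb_path K es \<and> (es \<noteq> [] \<longrightarrow> snd (last es) = fst (hd es))"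

definition cell_expansion :: "'v set set \<Rightarrow> ('v \<times> 'v) list \<Rightarrow> ('v \<times> 'v) list \<Rightarrow> bool" where
  "cell_expansion K C C' \<longleftrightarrow>
     (\<exists>xs ys w. C = xs @ ys \<and> C' = xs @ w @ ys \<and>
        ((\<exists>e\<in>Edge K. w = [e, rev_edge e]) \<or>
         (\<exists>e f g. w = [e, f, g] \<and> comb_cycle K [e, f, g])))"

definition null_homotopy ::
  "'v set set \<Rightarrow> ('v \<times> 'v) list \<Rightarrow> (nat \<Rightarrow> ('v \<times> 'v) list) \<Rightarrow> nat \<Rightarrow> bool" where
  "null_homotopy K C Cs m \<longleftrightarrow>
     Cs 0 = C \<and> Cs m = [] \<and> (\<forall>i\<le>m. comb_cycle K (Cs i)) \<and>
     (\<forall>i<m. cell_expansion K (Cs i) (Cs (Suc i)) \<or> cell_expansion K (Cs (Suc i)) (Cs i))"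

text \<open>Words in the free group on Edge(K): lists of letters (b, e), where (True, e) is e and
(False, e) is e^-1.\<close>
type_synonym 'v letter = "bool \<times> ('v \<times> 'v)"

definition inv_word :: "'v letter list \<Rightarrow> 'v letter list" where
  "inv_word w = rev (map (\<lambda>(b, e). (\<not> b, e)) w)"

definition free_red_step :: "'v letter list \<Rightarrow> 'v letter list \<Rightarrow> bool" where
  "free_red_step u v \<longleftrightarrow> (\<exists>xs ys b e. u = xs @ [(b, e), (\<not> b, e)] @ ys \<and> v = xs @ ys)"

definition freely_equal :: "'v letter list \<Rightarrow> 'v letter list \<Rightarrow> bool" where
  "freely_equal u v \<longleftrightarrow> (sup free_red_step (conversep free_red_step))\<^sup>*\<^sup>* u v"

definition relators_H :: "'v set set \<Rightarrow> 'v letter list set" where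
  "relators_H K =
     {[(True, e), (True, rev_edge e)] | e. e \<in> Edge K} \<union>
     {[(True, e), (True, f), (True, g)] | e f g. comb_cycle K [e, f, g]} \<union>
     {[(False, e), (False, f), (False, g)] | e f g. comb_cycle K [e, f, g]}"

definition relators_H_pm :: "'v set set \<Rightarrow> 'v letter list set" where
  "relators_H_pm K = relators_H K \<union> inv_word ` relators_H K"

definition area_H :: "'v set set \<Rightarrow> 'v letter list \<Rightarrow> nat" where
  "area_H K w = (LEAST m. \<exists>xs rs. length xs = m \<and> length rs = m \<and>
      (\<forall>x\<in>set xs. snd ` set x \<subseteq> Edge K) \<and> set rs \<subseteq> relators_H_pm K \<and>
      freely_equal w (concat (map (\<lambda>(x, r). x @ r @ inv_word x) (zip xs rs))))"

definition letter_pow :: "'v \<times> 'v \<Rightarrow> int \<Rightarrow> 'v letter list" where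
  "letter_pow e k = (if k \<ge> 0 then replicate (nat k) (True, e) else replicate (nat (- k)) (False, e))"

definition pow_word :: "('v \<times> 'v) list \<Rightarrow> int \<Rightarrow> 'v letter list" where
  "pow_word es n = concat (map (\<lambda>e. letter_pow e n) es)"

end

theory Submission
  imports Defs
begin

text \<open>In \<open>\<P>\<^sub>H\<close> the triangle relators \<open>bca\<close> and \<open>a\<inverse>b\<inverse>c\<inverse>\<close> give \<open>bc = a\<inverse> = cb\<close>, so two
  edges of a triangle commute at the cost of two relators.  Hence \<open>e\<^sup>k (rev_edge e)\<^sup>k\<close> has area at most \<open>k\<close>,
  and \<open>e\<^sup>k f\<^sup>k g\<^sup>k\<close> has area at most \<open>k\<^sup>2\<close>: split off one relator \<open>efg\<close> and move the remaining
  extra \<open>f\<close> across \<open>g\<^sup>k\<^sup>-\<^sup>1\<close>, using \<open>k\<^sup>2 = (k-1)\<^sup>2 + 1 + 2(k-1)\<close>.  Raising every letter of a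
  combinatorial null-homotopy to the power \<open>n\<close> turns each of its \<open>m\<close> elementary moves into the
  insertion or deletion of such a word, conjugated by a word in edges, so the area of
  \<open>e\<^sub>1\<^sup>n\<cdots>e\<^sub>l\<^sup>n\<close> is even at most \<open>m n\<^sup>2\<close>.\<close>

definition inv_letter :: "'v letter \<Rightarrow> 'v letter" where
  "inv_letter x = (\<not> fst x, snd x)"

lemma inv_letter_inv_letter [simp]: "inv_letter (inv_letter x) = x"
  by (simp add: inv_letter_def)

lemma inv_word_conv: "inv_word w = rev (map inv_letter w)"
  unfolding inv_word_def inv_letter_def by (simp add: case_prod_beta')

lemma inv_word_simps [simp]:
  "inv_word [] = []"
  "inv_word (x # w) = inv_word w @ [inv_letter x]"
  "inv_word (u @ v) = inv_word v @ inv_word u"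
  "inv_word (inv_word w) = w"
  by (simp_all add: inv_word_conv comp_def rev_map)

lemma equivclp_map:
  assumes "\<And>x y. r x y \<Longrightarrow> r (f x) (f y)"
  shows "equivclp r x y \<Longrightarrow> equivclp r (f x) (f y)"
  by (induction rule: equivclp_induct) (auto intro: equivclp_into_equivclp assms)

lemma freely_equal_eq_equivclp: "freely_equal = equivclp free_red_step"
  by (simp add: fun_eq_iff freely_equal_def equivclp_def symclp_pointfree)

lemmas freely_equal_refl [simp] = equivclp_refl[of free_red_step, folded freely_equal_eq_equivclp]
lemmas freely_equal_sym = equivclp_sym[of free_red_step, folded freely_equal_eq_equivclp]
lemmas freely_equal_trans [trans] = equivclp_trans[of free_red_step, folded freely_equal_eq_equivclp]

lemma free_red_step_append_cong:
  "free_red_step u v \<Longrightarrow> free_red_step (p @ u @ q) (p @ v @ q)"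
  unfolding free_red_step_def by (metis append.assoc)

lemma freely_equal_append_cong:
  "freely_equal u v \<Longrightarrow> freely_equal (p @ u @ q) (p @ v @ q)"
  unfolding freely_equal_eq_equivclp
  by (rule equivclp_map[of free_red_step "\<lambda>w. p @ w @ q", OF free_red_step_append_cong])

lemma freely_equal_append:
  assumes "freely_equal a a'" and "freely_equal b b'"
  shows "freely_equal (a @ b) (a' @ b')"
proof -
  have "freely_equal (a @ b) (a' @ b)"
    using freely_equal_append_cong[OF assms(1), of "[]" b] by simp
  also have "freely_equal \<dots> (a' @ b')"
    using freely_equal_append_cong[OF assms(2), of a' "[]"] by simp
  finally show ?thesis .
qed

lemma free_red_step_inv_word:
  "free_red_step u v \<Longrightarrow> free_red_step (inv_word u) (inv_word v)"
  unfolding free_red_step_def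
  by (elim exE conjE, rule_tac x = "inv_word ys" in exI, rule_tac x = "inv_word xs" in exI)
     (auto simp: inv_letter_def)

lemma freely_equal_inv_word:
  "freely_equal u v \<Longrightarrow> freely_equal (inv_word u) (inv_word v)"
  unfolding freely_equal_eq_equivclp
  by (rule equivclp_map[of free_red_step inv_word, OF free_red_step_inv_word])

lemma freely_equal_cancel_letter: "freely_equal (p @ [x, inv_letter x] @ q) (p @ q)"
proof -
  have "free_red_step (p @ [x, inv_letter x] @ q) (p @ q)"
    unfolding free_red_step_def inv_letter_def
    by (rule exI[of _ p], rule exI[of _ q]) (cases x, auto)
  then show ?thesis
    by (simp add: freely_equal_eq_equivclp r_into_equivclp)
qed

lemma freely_equal_cancel_word: "freely_equal (p @ u @ inv_word u @ q) (p @ q)"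
proof (induction u arbitrary: p q)
  case (Cons x u)
  have "freely_equal ((p @ [x]) @ u @ inv_word u @ [inv_letter x] @ q) ((p @ [x]) @ [inv_letter x] @ q)"
    using Cons.IH[of "p @ [x]" "[inv_letter x] @ q"] by simp
  also have "freely_equal \<dots> (p @ q)"
    using freely_equal_cancel_letter[of p x q] by simp
  finally show ?case by simp
qed simp

lemma freely_equal_cancel_inv_word: "freely_equal (p @ inv_word u @ u @ q) (p @ q)"
  using freely_equal_cancel_word[of p "inv_word u" q] by simp

definition conj_prod :: "'v letter list list \<Rightarrow> 'v letter list list \<Rightarrow> 'v letter list" where
  "conj_prod xs rs = concat (map (\<lambda>(x, r). x @ r @ inv_word x) (zip xs rs))"

lemma conj_prod_Nil [simp]: "conj_prod [] [] = []"
  by (simp add: conj_prod_def)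

lemma conj_prod_Cons [simp]: "conj_prod (x # xs) (r # rs) = x @ r @ inv_word x @ conj_prod xs rs"
  by (simp add: conj_prod_def)

lemma conj_prod_append:
  "length xs = length rs \<Longrightarrow> conj_prod (xs @ ys) (rs @ ss) = conj_prod xs rs @ conj_prod ys ss"
  by (simp add: conj_prod_def)

lemma conj_prod_conjugate:
  "length xs = length rs \<Longrightarrow>
   freely_equal (conj_prod (map ((@) u) xs) rs) (u @ conj_prod xs rs @ inv_word u)"
proof (induction xs rs rule: list_induct2)
  case Nil
  show ?case
    using freely_equal_sym[OF freely_equal_cancel_word[of "[]" u "[]"]] by simp
next
  case (Cons x xs r rs)
  let ?y = "u @ x @ r @ inv_word x"
  have "freely_equal (conj_prod (map ((@) u) (x # xs)) (r # rs))
      ((?y @ inv_word u) @ (u @ conj_prod xs rs @ inv_word u))"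
    using freely_equal_append[OF freely_equal_refl[of "?y @ inv_word u"] Cons.IH] by simp
  also have "freely_equal \<dots> (?y @ conj_prod xs rs @ inv_word u)"
    using freely_equal_cancel_inv_word[of ?y u "conj_prod xs rs @ inv_word u"] by simp
  finally show ?case by simp
qed

lemma inv_word_conj_prod:
  "length xs = length rs \<Longrightarrow> inv_word (conj_prod xs rs) = conj_prod (rev xs) (rev (map inv_word rs))"
  by (induction xs rs rule: list_induct2) (auto simp: conj_prod_append)

definition area_at_most :: "'v set set \<Rightarrow> 'v letter list \<Rightarrow> nat \<Rightarrow> bool" where
  "area_at_most K w c \<longleftrightarrow> (\<exists>xs rs. length xs = length rs \<and> length xs \<le> c \<and>
      (\<forall>x\<in>set xs. snd ` set x \<subseteq> Edge K) \<and> set rs \<subseteq> relators_H_pm K \<and>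
      freely_equal w (conj_prod xs rs))"

lemma area_H_le: "area_at_most K w c \<Longrightarrow> area_H K w \<le> c"
proof -
  assume "area_at_most K w c"
  then obtain xs rs where "length xs = length rs" "length xs \<le> c"
    "\<forall>x\<in>set xs. snd ` set x \<subseteq> Edge K" "set rs \<subseteq> relators_H_pm K"
    "freely_equal w (conj_prod xs rs)"
    unfolding area_at_most_def by blast
  then have "area_H K w \<le> length xs"
    unfolding area_H_def conj_prod_def by (intro Least_le) auto
  with \<open>length xs \<le> c\<close> show ?thesis by simp
qed

lemma area_at_most_mono: "area_at_most K w c \<Longrightarrow> c \<le> c' \<Longrightarrow> area_at_most K w c'"
  unfolding area_at_most_def by (meson order_trans)

lemma area_at_most_freely_equal:
  "area_at_most K w c \<Longrightarrow> freely_equal w' w \<Longrightarrow> area_at_most K w' c"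
  unfolding area_at_most_def by (meson freely_equal_trans)

lemma area_at_most_Nil [simp]: "area_at_most K [] 0"
  unfolding area_at_most_def by (auto intro!: exI[of _ "[]"])

lemma area_at_most_relator: "r \<in> relators_H_pm K \<Longrightarrow> area_at_most K r 1"
  unfolding area_at_most_def by (rule exI[of _ "[[]]"], rule exI[of _ "[r]"]) simp

lemma area_at_most_insert:
  assumes "area_at_most K (u @ v) a" and "area_at_most K w b" and "snd ` set u \<subseteq> Edge K"
  shows "area_at_most K (u @ w @ v) (a + b)"
proof -
  obtain xs1 rs1 where 1: "length xs1 = length rs1" "length xs1 \<le> a"
    "\<forall>x\<in>set xs1. snd ` set x \<subseteq> Edge K" "set rs1 \<subseteq> relators_H_pm K"
    "freely_equal (u @ v) (conj_prod xs1 rs1)"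
    using assms(1) unfolding area_at_most_def by blast
  obtain xs2 rs2 where 2: "length xs2 = length rs2" "length xs2 \<le> b"
    "\<forall>x\<in>set xs2. snd ` set x \<subseteq> Edge K" "set rs2 \<subseteq> relators_H_pm K"
    "freely_equal w (conj_prod xs2 rs2)"
    using assms(2) unfolding area_at_most_def by blast
  have "freely_equal (u @ w @ v) (u @ conj_prod xs2 rs2 @ v)"
    by (rule freely_equal_append_cong[OF 2(5)])
  also have "freely_equal \<dots> ((u @ conj_prod xs2 rs2 @ inv_word u) @ (u @ v))"
    using freely_equal_sym[OF freely_equal_cancel_inv_word[of "u @ conj_prod xs2 rs2" u v]] by simp
  also have "freely_equal \<dots> (conj_prod (map ((@) u) xs2) rs2 @ conj_prod xs1 rs1)"
    using freely_equal_append[OF freely_equal_sym[OF conj_prod_conjugate] 1(5)] 2(1) by simp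
  also have "\<dots> = conj_prod (map ((@) u) xs2 @ xs1) (rs2 @ rs1)"
    using 2(1) by (simp add: conj_prod_append)
  finally have "freely_equal (u @ w @ v) (conj_prod (map ((@) u) xs2 @ xs1) (rs2 @ rs1))" .
  moreover have "\<forall>x\<in>set (map ((@) u) xs2 @ xs1). snd ` set x \<subseteq> Edge K"
    using 1(3) 2(3) assms(3) by (simp add: image_Un ball_Un)
  ultimately show ?thesis
    unfolding area_at_most_def using 1 2
    by - (rule exI[of _ "map ((@) u) xs2 @ xs1"], rule exI[of _ "rs2 @ rs1"], auto)
qed

lemma inv_word_relator: "r \<in> relators_H_pm K \<Longrightarrow> inv_word r \<in> relators_H_pm K"
  unfolding relators_H_pm_def by (auto simp: image_iff)

lemma area_at_most_inv_word: "area_at_most K w c \<Longrightarrow> area_at_most K (inv_word w) c"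
proof -
  assume "area_at_most K w c"
  then obtain xs rs where "length xs = length rs" "length xs \<le> c"
    "\<forall>x\<in>set xs. snd ` set x \<subseteq> Edge K" "set rs \<subseteq> relators_H_pm K"
    "freely_equal w (conj_prod xs rs)"
    unfolding area_at_most_def by blast
  moreover from this have "freely_equal (inv_word w) (conj_prod (rev xs) (rev (map inv_word rs)))"
    using freely_equal_inv_word inv_word_conj_prod by metis
  ultimately show ?thesis
    unfolding area_at_most_def
    by - (rule exI[of _ "rev xs"], rule exI[of _ "rev (map inv_word rs)"], auto simp: inv_word_relator)
qed

lemma area_at_most_delete:
  assumes "area_at_most K (u @ w @ v) a" and "area_at_most K w b" and "snd ` set u \<subseteq> Edge K"
  shows "area_at_most K (u @ v) (a + b)"
proof -
  have "area_at_most K (u @ inv_word w @ (w @ v)) (a + b)"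
    by (rule area_at_most_insert[OF assms(1) area_at_most_inv_word[OF assms(2)] assms(3)])
  then show ?thesis
    using area_at_most_freely_equal freely_equal_sym freely_equal_cancel_inv_word by blast
qed

lemma rev_edge_in_Edge: "e \<in> Edge K \<Longrightarrow> rev_edge e \<in> Edge K"
  by (auto simp: Edge_def rev_edge_def insert_commute)

lemma rev_edge_rev_edge [simp]: "rev_edge (rev_edge e) = e"
  by (simp add: rev_edge_def)

lemma comb_cycle_triangle_iff:
  "comb_cycle K [e, f, g] \<longleftrightarrow>
   e \<in> Edge K \<and> f \<in> Edge K \<and> g \<in> Edge K \<and> snd e = fst f \<and> snd f = fst g \<and> snd g = fst e"
proof -
  have "(\<forall>i. Suc i < 3 \<longrightarrow> snd ([e, f, g] ! i) = fst ([e, f, g] ! Suc i))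
        \<longleftrightarrow> snd e = fst f \<and> snd f = fst g"
    by (auto simp: less_Suc_eq numeral_3_eq_3)
  then show ?thesis
    unfolding comb_cycle_def comb_path_def by auto
qed

lemma triangle_relator:
  "comb_cycle K [e, f, g] \<Longrightarrow> [(s, e), (s, f), (s, g)] \<in> relators_H_pm K"
  unfolding relators_H_pm_def relators_H_def by (cases s) blast+

lemma edge_relator:
  assumes "e \<in> Edge K"
  shows "[(s, e), (s, rev_edge e)] \<in> relators_H_pm K"
proof (cases s)
  case True
  then show ?thesis
    unfolding relators_H_pm_def relators_H_def using assms by blast
next
  case False
  have "[(True, rev_edge e), (True, e)] \<in> relators_H K"
    unfolding relators_H_def using rev_edge_in_Edge[OF assms] by force
  then have "inv_word [(True, rev_edge e), (True, e)] \<in> relators_H_pm K"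
    unfolding relators_H_pm_def by blast
  with False show ?thesis
    by (simp add: inv_letter_def)
qed

text \<open>If \<open>bca\<close> and \<open>a\<inverse>b\<inverse>c\<inverse>\<close> are relators then \<open>bc = a\<inverse> = cb\<close>.\<close>
lemma area_at_most_commute:
  assumes "[b, c, a] \<in> relators_H_pm K" and "[inv_letter a, inv_letter b, inv_letter c] \<in> relators_H_pm K"
    and "snd ` set u \<subseteq> Edge K" and "area_at_most K (u @ [c, b] @ v) d"
  shows "area_at_most K (u @ [b, c] @ v) (d + 2)"
proof -
  have "area_at_most K ([b, c, a] @ [inv_letter a, inv_letter b, inv_letter c]) 2"
    unfolding area_at_most_def using assms(1,2)
    by - (rule exI[of _ "[[], []]"],
      rule exI[of _ "[[b, c, a], [inv_letter a, inv_letter b, inv_letter c]]"], simp)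
  then have commutator: "area_at_most K [b, c, inv_letter b, inv_letter c] 2"
    using area_at_most_freely_equal freely_equal_sym
      freely_equal_cancel_letter[of "[b, c]" a "[inv_letter b, inv_letter c]"] by fastforce
  have "area_at_most K (u @ [b, c, inv_letter b, inv_letter c] @ [c, b] @ v) (d + 2)"
    by (rule area_at_most_insert[OF assms(4) commutator assms(3)])
  moreover have "freely_equal (u @ [b, c, inv_letter b] @ [inv_letter c, c] @ [b] @ v)
      (u @ [b, c, inv_letter b] @ [b] @ v)"
    using freely_equal_cancel_letter[of "u @ [b, c, inv_letter b]" "inv_letter c" "[b] @ v"] by simp
  moreover have "freely_equal (u @ [b, c] @ [inv_letter b, b] @ v) (u @ [b, c] @ v)"
    using freely_equal_cancel_letter[of "u @ [b, c]" "inv_letter b" v] by simp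
  ultimately show ?thesis
    using area_at_most_freely_equal freely_equal_sym freely_equal_trans by fastforce
qed

lemma area_at_most_commute_replicate:
  assumes "[b, c, a] \<in> relators_H_pm K" and "[inv_letter a, inv_letter b, inv_letter c] \<in> relators_H_pm K"
    and "snd c \<in> Edge K"
  shows "snd ` set u \<subseteq> Edge K \<Longrightarrow> area_at_most K (u @ replicate k c @ [b] @ v) d
     \<Longrightarrow> area_at_most K (u @ [b] @ replicate k c @ v) (d + 2 * k)"
proof (induction k arbitrary: u d)
  case (Suc k)
  have "area_at_most K ((u @ [c]) @ [b] @ replicate k c @ v) (d + 2 * k)"
    using Suc.IH[of "u @ [c]"] Suc.prems assms(3) by simp
  then have "area_at_most K (u @ [b, c] @ replicate k c @ v) (d + 2 * k + 2)"
    using area_at_most_commute[OF assms(1,2) Suc.prems(1)] by simp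
  then show ?case by simp
qed simp

lemma area_at_most_edge_power:
  assumes "[a, b] \<in> relators_H_pm K" and "snd a \<in> Edge K"
  shows "area_at_most K (replicate k a @ replicate k b) k"
proof (induction k)
  case (Suc k)
  have "area_at_most K ([a] @ (replicate k a @ replicate k b) @ [b]) (k + 1)"
    using area_at_most_insert[OF _ Suc.IH, of "[a]" "[b]" 1] area_at_most_relator[OF assms(1)] assms(2)
    by simp
  then show ?case by (simp add: replicate_app_Cons_same)
qed simp

lemma area_at_most_triangle_power:
  assumes "[a, b, c] \<in> relators_H_pm K" and "[b, c, a] \<in> relators_H_pm K"
    and "[inv_letter a, inv_letter b, inv_letter c] \<in> relators_H_pm K"
    and "snd a \<in> Edge K" and "snd b \<in> Edge K" and "snd c \<in> Edge K"
  shows "area_at_most K (replicate k a @ replicate k b @ replicate k c) (k * k)"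
proof (induction k)
  case (Suc k)
  have "area_at_most K ([a] @ (replicate k a @ replicate k b @ replicate k c) @ [b, c]) (k * k + 1)"
    using area_at_most_insert[OF _ Suc.IH, of "[a]" "[b, c]" 1] area_at_most_relator[OF assms(1)] assms(4)
    by simp
  then have "area_at_most K ((a # replicate k a @ replicate k b) @ replicate k c @ [b] @ [c]) (k * k + 1)"
    by simp
  with assms(4,5) have "area_at_most K ((a # replicate k a @ replicate k b) @ [b] @ replicate k c @ [c])
      (k * k + 1 + 2 * k)"
    by (intro area_at_most_commute_replicate[OF assms(2,3,6)]) auto
  then show ?case
    by (simp add: replicate_app_Cons_same mult_2 add_ac)
qed simp

lemma letter_pow_conv: "letter_pow e n = replicate (nat \<bar>n\<bar>) (0 \<le> n, e)"
  by (simp add: letter_pow_def)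

lemma pow_word_append [simp]: "pow_word (xs @ ys) n = pow_word xs n @ pow_word ys n"
  by (simp add: pow_word_def)

lemma snd_set_pow_word: "snd ` set (pow_word xs n) \<subseteq> set xs"
  by (auto simp: pow_word_def letter_pow_def split: if_splits)

lemma area_at_most_pow_word_cell:
  assumes "(\<exists>e\<in>Edge K. w = [e, rev_edge e]) \<or> (\<exists>e f g. w = [e, f, g] \<and> comb_cycle K [e, f, g])"
  shows "area_at_most K (pow_word w n) (nat \<bar>n\<bar> ^ 2)"
  using assms
proof
  assume "\<exists>e\<in>Edge K. w = [e, rev_edge e]"
  then obtain e where e: "e \<in> Edge K" "w = [e, rev_edge e]" by blast
  have "area_at_most K (pow_word w n) (nat \<bar>n\<bar>)"
    using area_at_most_edge_power[OF edge_relator[OF e(1)]] e by (simp add: pow_word_def letter_pow_conv)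
  then show ?thesis
    by (rule area_at_most_mono) (simp add: power2_eq_square le_square)
next
  assume "\<exists>e f g. w = [e, f, g] \<and> comb_cycle K [e, f, g]"
  then obtain e f g where w: "w = [e, f, g]" and t: "comb_cycle K [e, f, g]" by blast
  then have t': "comb_cycle K [f, g, e]" by (simp add: comb_cycle_triangle_iff)
  define s where "s = (0 \<le> n)"
  have "area_at_most K (replicate k (s, e) @ replicate k (s, f) @ replicate k (s, g)) (k * k)" for k
    by (rule area_at_most_triangle_power)
      (use triangle_relator[OF t] triangle_relator[OF t'] triangle_relator[OF t, of "\<not> s"] t in
        \<open>simp_all add: inv_letter_def comb_cycle_triangle_iff\<close>)
  then show ?thesis
    by (simp add: w pow_word_def letter_pow_conv s_def power2_eq_square)
qed

lemma area_at_most_pow_word_cell_move: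
  assumes "cell_expansion K A B \<or> cell_expansion K B A" and "set A \<subseteq> Edge K"
    and "area_at_most K (pow_word B n) c"
  shows "area_at_most K (pow_word A n) (c + nat \<bar>n\<bar> ^ 2)"
proof -
  obtain xs ys w where
    split: "A = xs @ ys \<and> B = xs @ w @ ys \<or> B = xs @ ys \<and> A = xs @ w @ ys" and
    cell: "(\<exists>e\<in>Edge K. w = [e, rev_edge e]) \<or> (\<exists>e f g. w = [e, f, g] \<and> comb_cycle K [e, f, g])"
    using assms(1) unfolding cell_expansion_def by blast
  have "set xs \<subseteq> Edge K"
    using split assms(2) by auto
  then have conjugator: "snd ` set (pow_word xs n) \<subseteq> Edge K"
    by (rule order_trans[OF snd_set_pow_word])
  note cost = area_at_most_pow_word_cell[OF cell, of n]
  from split show ?thesis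
  proof
    assume "A = xs @ ys \<and> B = xs @ w @ ys"
    then show ?thesis
      using area_at_most_delete[OF _ cost conjugator] assms(3) by simp
  next
    assume "B = xs @ ys \<and> A = xs @ w @ ys"
    then show ?thesis
      using area_at_most_insert[OF _ cost conjugator] assms(3) by simp
  qed
qed

lemma area_at_most_pow_word_null_homotopy:
  assumes "null_homotopy K C Cs m"
  shows "area_at_most K (pow_word C n) (m * nat \<bar>n\<bar> ^ 2)"
proof -
  have "area_at_most K (pow_word (Cs i) n) ((m - i) * nat \<bar>n\<bar> ^ 2)" if "i \<le> m" for i
    using that
  proof (induction rule: inc_induct)
    case base
    then show ?case using assms by (simp add: null_homotopy_def pow_word_def)
  next
    case (step i)
    have "set (Cs i) \<subseteq> Edge K"
      using assms step.hyps by (simp add: null_homotopy_def comb_cycle_def comb_path_def)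
    moreover have "(m - Suc i) * nat \<bar>n\<bar> ^ 2 + nat \<bar>n\<bar> ^ 2 = (m - i) * nat \<bar>n\<bar> ^ 2"
      using Suc_diff_Suc[OF step.hyps(2)] by (metis add.commute mult_Suc)
    ultimately show ?case
      using area_at_most_pow_word_cell_move[OF _ _ step.IH] assms step.hyps
      by (simp add: null_homotopy_def)
  qed
  from this[of 0] assms show ?thesis
    by (simp add: null_homotopy_def)
qed

theorem lemma4p6:
  fixes K :: "('v::finite) set set"
    and es :: "('v \<times> 'v) list"
    and Cs :: "nat \<Rightarrow> ('v \<times> 'v) list"
    and m :: nat
    and n :: int
  assumes "abs_simplicial_complex K"
    and "finite_complex K"
    and "flag_complex K"
    and "simply_connected_complex K"
    and "comb_cycle K es"
    and "null_homotopy K es Cs m"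
  shows "int (area_H K (pow_word es n)) \<le> 3 * int m * \<bar>n\<bar>^2"
proof -
  have "area_H K (pow_word es n) \<le> m * nat \<bar>n\<bar> ^ 2"
    by (rule area_H_le[OF area_at_most_pow_word_null_homotopy[OF assms(6)]])
  then have "int (area_H K (pow_word es n)) \<le> int (m * nat \<bar>n\<bar> ^ 2)"
    by (simp only: of_nat_le_iff)
  also have "\<dots> = int m * \<bar>n\<bar> ^ 2"
    by simp
  also have "\<dots> \<le> 3 * int m * \<bar>n\<bar> ^ 2"
    by simp
  finally show ?thesis .
qed

end
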